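(* Let $d\ge3$ be an integer and $0<\beta<\beta_{\mathrm{KS}}=\log\left(\frac{\sqrt{d-1}+1}{\sqrt{d-1}-1}\right)$. For $\alpha\in(-1,1)$ let $z=\sqrt{(1+e^{-2\beta})^2-\alpha^2(1-e^{-2\beta})^2}$, \begin{align*} G(\alpha,\beta)&=2\log2-\log\big((1+e^{-2\beta})(1-e^{-2\beta})^2\big)-(1+\alpha)\log(1+\alpha)-(1-\alpha)\log(1-\alpha)\\ &\quad+\frac{1+\alpha}{2}\log\Big((1+e^{-2\beta})^2+\alpha(1-e^{-2\beta})^2-2e^{-\beta}z\Big)+\frac{1-\alpha}{2}\log\Big((1+e^{-2\beta})^2-\alpha(1-e^{-2\beta})^2-2e^{-\beta}z\Big), \end{align*} and \[ f_d(\alpha,\beta)=\log2+H\!\left(\frac{1+\alpha}{2}\right)-\frac d2\,G(\alpha,\beta), \] where $H(p)=-p\log p-(1-p)\log(1-p)$. Then $\arg\max_{-1<\alpha<1}f_d(\alpha,\beta)=0$. *)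

theory Defs
  imports Complex_Main
begin

definition beta_KS :: "nat \<Rightarrow> real" where
  "beta_KS d = ln ((sqrt (real d - 1) + 1) / (sqrt (real d - 1) - 1))"

definition binent :: "real \<Rightarrow> real" where
  "binent p = - p * ln p - (1 - p) * ln (1 - p)"

definition zfun :: "real \<Rightarrow> real \<Rightarrow> real" where
  "zfun \<alpha> \<beta> = sqrt ((1 + exp (-2*\<beta>))^2 - \<alpha>^2 * (1 - exp (-2*\<beta>))^2)"

definition Gfun :: "real \<Rightarrow> real \<Rightarrow> real" where
  "Gfun \<alpha> \<beta> =
     2 * ln 2 - ln ((1 + exp (-2*\<beta>)) * (1 - exp (-2*\<beta>))^2)
     - (1 + \<alpha>) * ln (1 + \<alpha>) - (1 - \<alpha>) * ln (1 - \<alpha>)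
     + (1 + \<alpha>) / 2 * ln ((1 + exp (-2*\<beta>))^2 + \<alpha> * (1 - exp (-2*\<beta>))^2
                              - 2 * exp (-\<beta>) * zfun \<alpha> \<beta>)
     + (1 - \<alpha>) / 2 * ln ((1 + exp (-2*\<beta>))^2 - \<alpha> * (1 - exp (-2*\<beta>))^2
                              - 2 * exp (-\<beta>) * zfun \<alpha> \<beta>)"

definition fd :: "nat \<Rightarrow> real \<Rightarrow> real \<Rightarrow> real" where
  "fd d \<alpha> \<beta> = ln 2 + binent ((1 + \<alpha>) / 2) - real d / 2 * Gfun \<alpha> \<beta>"

end

theory Submission
  imports Defs
begin

(*
  Put t = exp (-beta), w = sqrt ((1 + t^2) + alpha (1 - t^2)) and let v be w with alpha replaced
  by -alpha. Then z = w v, the two logarithms in G are 2 ln (w - t v) and 2 ln (v - t w), and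
  (w - t v)(w + t v) = (1 - t^4)(1 + alpha). Hence f_d = const + psi with
    psi alpha = (d chi alpha - (1 + alpha) ln (1 + alpha) - (1 - alpha) ln (1 - alpha)) / 2,
    chi alpha = (1 + alpha) ln (w + t v) + (1 - alpha) ln (v + t w),
  and psi is even. The derivative of chi is just ln ((w + t v) / (v + t w)), and writing
  c = tanh (beta / 2), r = (w - v) / (w + v) one finds
    psi' alpha = (d - 1) artanh (c r) - artanh (r / c).
  For alpha > 0, superadditivity of artanh on [0, 1) gives
    (d - 1) artanh (c r) <= artanh ((d - 1) c r) < artanh (r / c),
  since (d - 1) c^2 < 1 is exactly the condition beta < beta_KS. So psi decreases strictly
  on [0, 1), and by evenness alpha = 0 is the unique maximiser.
*)

lemma artanh_real_less_artanh:
  fixes x y :: real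
  assumes "-1 < x" "x < y" "y < 1"
  shows "artanh x < artanh y"
proof -
  have "(1 + x) * (1 - y) < (1 + y) * (1 - x)"
    using assms by (simp add: algebra_simps)
  then have "(1 + x) / (1 - x) < (1 + y) / (1 - y)"
    using assms by (simp add: divide_simps)
  then show ?thesis
    using assms by (simp add: artanh_def)
qed

lemma artanh_real_less_iff:
  fixes x y :: real
  assumes "-1 < x" "x < 1" "-1 < y" "y < 1"
  shows "artanh x < artanh y \<longleftrightarrow> x < y"
  using artanh_real_less_artanh[of x y] artanh_real_less_artanh[of y x] assms
  by (cases x y rule: linorder_cases) auto

lemma artanh_add_le:
  fixes a b :: real
  assumes "0 \<le> a" "0 \<le> b" "a + b < 1"
  shows "artanh a + artanh b \<le> artanh (a + b)"
proof -
  have "(1 + a) * (1 + b) * (1 - (a + b)) \<le> (1 + (a + b)) * ((1 - a) * (1 - b))"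
  proof -
    have "(1 + (a + b)) * ((1 - a) * (1 - b)) - (1 + a) * (1 + b) * (1 - (a + b)) = 2 * a * b * (a + b)"
      by (simp add: algebra_simps)
    then show ?thesis
      using assms by (metis diff_ge_0_iff_ge zero_le_mult_iff zero_le_numeral add_nonneg_nonneg)
  qed
  then have "(1 + a) / (1 - a) * ((1 + b) / (1 - b)) \<le> (1 + (a + b)) / (1 - (a + b))"
    using assms by (simp add: divide_simps)
  moreover have "artanh a + artanh b = ln ((1 + a) / (1 - a) * ((1 + b) / (1 - b))) / 2"
    unfolding artanh_def by (subst ln_mult) (use assms in simp_all)
  ultimately show ?thesis
    using assms by (simp add: artanh_def)
qed

lemma of_nat_mult_artanh_le:
  fixes x :: real
  assumes "0 \<le> x" "real n * x < 1"
  shows "real n * artanh x \<le> artanh (real n * x)"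
  using assms
proof (induction n)
  case 0
  then show ?case by simp
next
  case (Suc n)
  have "real n * x < 1"
    using Suc.prems by (simp add: algebra_simps)
  then have "real (Suc n) * artanh x \<le> artanh (real n * x) + artanh x"
    using Suc by (simp add: algebra_simps)
  also have "\<dots> \<le> artanh (real (Suc n) * x)"
    using artanh_add_le[of "real n * x" x] Suc.prems by (simp add: algebra_simps)
  finally show ?case .
qed

lemma artanh_ratio:
  fixes p q :: real
  assumes "0 < p" "0 < q"
  shows "2 * artanh ((p - q) / (p + q)) = ln (p / q)"
proof -
  have "1 + (p - q) / (p + q) = 2 * p / (p + q)" "1 - (p - q) / (p + q) = 2 * q / (p + q)"
    using assms by (simp_all add: field_simps)
  then show ?thesis
    using assms by (simp add: artanh_def)
qed

lemma of_nat_mult_artanh_mult_less: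
  fixes c r :: real
  assumes "0 < r" "r < c" "real n * c\<^sup>2 < 1"
  shows "real n * artanh (c * r) < artanh (r / c)"
proof -
  have c: "0 < c"
    using assms by linarith
  have "real n * (c * r) = (real n * c\<^sup>2) * (r / c)"
    using c by (simp add: power2_eq_square)
  also have "\<dots> < r / c"
    using mult_strict_right_mono[of "real n * c\<^sup>2" 1 "r / c"] assms c by simp
  finally have less: "real n * (c * r) < r / c" .
  have "r / c < 1"
    using assms c by simp
  have "0 \<le> c * r"
    using assms c by simp
  have "real n * artanh (c * r) \<le> artanh (real n * (c * r))"
    using \<open>0 \<le> c * r\<close> less \<open>r / c < 1\<close> by (intro of_nat_mult_artanh_le) auto
  also have "\<dots> < artanh (r / c)"
    using \<open>0 \<le> c * r\<close> less \<open>r / c < 1\<close>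
    by (intro artanh_real_less_artanh) (auto intro: order.strict_trans2[of "-1" 0])
  finally show ?thesis .
qed

lemma ln_ratio_mult_less:
  fixes t v w :: real
  assumes t: "0 < t" "t < 1" and vw: "0 < v" "v < w" "t * w < v"
    and n: "real n * ((1 - t) / (1 + t))\<^sup>2 < 1"
  shows "real n * ln ((w + t * v) / (v + t * w)) < ln ((w - t * v) / (v - t * w))"
proof -
  \<comment> \<open>both ratios are of the form (1 + x) / (1 - x): with x = c r and with x = r / c\<close>
  define c where "c = (1 - t) / (1 + t)"
  define r where "r = (w - v) / (w + v)"
  have "((w + t * v) - (v + t * w)) / ((w + t * v) + (v + t * w)) = c * r"
    using t vw by (simp add: c_def r_def field_simps)
  then have plus: "ln ((w + t * v) / (v + t * w)) = 2 * artanh (c * r)"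
    using artanh_ratio[of "w + t * v" "v + t * w"] t vw by (simp add: add_pos_pos)
  have "((w - t * v) - (v - t * w)) / ((w - t * v) + (v - t * w)) = r / c"
    using t vw by (simp add: c_def r_def field_simps)
  then have minus: "ln ((w - t * v) / (v - t * w)) = 2 * artanh (r / c)"
    using artanh_ratio[of "w - t * v" "v - t * w"] t vw
    by (simp add: mult_strict_mono' less_trans[of "t * v" "t * w"])
  have "r < c"
    using t vw by (simp add: c_def r_def field_simps)
  moreover have "0 < r"
    using vw by (simp add: r_def)
  ultimately have "real n * artanh (c * r) < artanh (r / c)"
    using n by (intro of_nat_mult_artanh_mult_less) (simp_all add: c_def)
  then show ?thesis
    using plus minus by simp
qed

definition wfun :: "real \<Rightarrow> real \<Rightarrow> real" where
  "wfun t a = sqrt (1 + t\<^sup>2 + a * (1 - t\<^sup>2))"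

definition chi :: "real \<Rightarrow> real \<Rightarrow> real" where
  "chi t a = (1 + a) * ln (wfun t a + t * wfun t (-a)) + (1 - a) * ln (wfun t (-a) + t * wfun t a)"

lemma wfun_radicand_pos:
  fixes a t :: real
  assumes "-1 < a" "a < 1"
  shows "0 < 1 + t\<^sup>2 + a * (1 - t\<^sup>2)"
proof -
  have "1 + t\<^sup>2 + a * (1 - t\<^sup>2) = (1 + a) + (1 - a) * t\<^sup>2"
    by (simp add: algebra_simps)
  moreover have "0 < (1 + a) + (1 - a) * t\<^sup>2"
    using assms by (simp add: add_pos_nonneg)
  ultimately show ?thesis
    by simp
qed

lemma wfun_pos: "-1 < a \<Longrightarrow> a < 1 \<Longrightarrow> 0 < wfun t a"
  by (simp add: wfun_def wfun_radicand_pos)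

lemma wfun_squared: "-1 < a \<Longrightarrow> a < 1 \<Longrightarrow> (wfun t a)\<^sup>2 = 1 + t\<^sup>2 + a * (1 - t\<^sup>2)"
  by (simp add: wfun_def wfun_radicand_pos less_imp_le)

lemma wfun_less_wfun:
  fixes t :: real
  assumes "\<bar>t\<bar> < 1" "a < b"
  shows "wfun t a < wfun t b"
proof -
  have "t\<^sup>2 < 1"
    using assms by (simp add: abs_square_less_1)
  then show ?thesis
    using assms by (simp add: wfun_def)
qed

lemma wfun_product:
  assumes "-1 < a" "a < 1"
  shows "(wfun t a - t * wfun t (-a)) * (wfun t a + t * wfun t (-a)) = (1 + t\<^sup>2) * (1 - t\<^sup>2) * (1 + a)"
proof -
  have "(wfun t a - t * wfun t (-a)) * (wfun t a + t * wfun t (-a)) = (wfun t a)\<^sup>2 - t\<^sup>2 * (wfun t (-a))\<^sup>2"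
    by (simp add: algebra_simps power2_eq_square)
  also have "\<dots> = (1 + t\<^sup>2) * (1 - t\<^sup>2) * (1 + a)"
    using assms by (simp add: wfun_squared) (simp add: algebra_simps power2_eq_square)
  finally show ?thesis .
qed

lemma mult_wfun_minus_less_wfun:
  fixes t :: real
  assumes "0 < t" "t < 1" "-1 < a" "a < 1"
  shows "t * wfun t (-a) < wfun t a"
proof -
  have "0 < (wfun t a - t * wfun t (-a)) * (wfun t a + t * wfun t (-a))"
    using assms by (simp add: wfun_product power_less_one_iff add_pos_nonneg)
  moreover have "0 < wfun t a + t * wfun t (-a)"
    using assms by (simp add: wfun_pos add_pos_pos)
  ultimately show ?thesis
    by (simp add: zero_less_mult_iff)
qed

lemma ln_wfun_diff:
  fixes t :: real
  assumes "0 < t" "t < 1" "-1 < a" "a < 1"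
  shows "ln (wfun t a - t * wfun t (-a))
    = ln (1 + t\<^sup>2) + ln (1 - t\<^sup>2) + ln (1 + a) - ln (wfun t a + t * wfun t (-a))"
proof -
  have "0 < 1 - t\<^sup>2" "0 < 1 + t\<^sup>2"
    using assms by (simp_all add: power_less_one_iff add_pos_nonneg)
  have pos: "0 < wfun t a + t * wfun t (-a)" "0 < wfun t a - t * wfun t (-a)"
    using assms mult_wfun_minus_less_wfun[of t a] by (simp_all add: wfun_pos add_pos_pos)
  have "ln (wfun t a - t * wfun t (-a)) + ln (wfun t a + t * wfun t (-a))
      = ln ((1 + t\<^sup>2) * (1 - t\<^sup>2) * (1 + a))"
    using pos ln_mult[of "wfun t a - t * wfun t (-a)" "wfun t a + t * wfun t (-a)"] assms
    by (simp add: wfun_product)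
  also have "\<dots> = ln (1 + t\<^sup>2) + ln (1 - t\<^sup>2) + ln (1 + a)"
    using assms \<open>0 < 1 - t\<^sup>2\<close> \<open>0 < 1 + t\<^sup>2\<close> by (simp add: ln_mult)
  finally show ?thesis
    by simp
qed

lemma Gfun_eq_chi:
  assumes "0 < \<beta>" "-1 < a" "a < 1"
  shows "Gfun a \<beta> = 2 * ln 2 + ln (1 + exp (-2 * \<beta>)) - chi (exp (-\<beta>)) a"
proof -
  define t where "t = exp (-\<beta>)"
  define w v where "w = wfun t a" and "v = wfun t (-a)"
  have t: "0 < t" "t < 1"
    using assms by (simp_all add: t_def)
  have t2: "exp (-2 * \<beta>) = t\<^sup>2"
    by (simp add: t_def power2_eq_square exp_add[symmetric])
  have w2: "w\<^sup>2 = 1 + t\<^sup>2 + a * (1 - t\<^sup>2)" and v2: "v\<^sup>2 = 1 + t\<^sup>2 - a * (1 - t\<^sup>2)"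
    using assms by (simp_all add: w_def v_def wfun_squared)
  have z: "zfun a \<beta> = w * v"
  proof -
    have "(1 + t\<^sup>2)\<^sup>2 - a\<^sup>2 * (1 - t\<^sup>2)\<^sup>2 = w\<^sup>2 * v\<^sup>2"
      unfolding w2 v2 by (simp add: algebra_simps power2_eq_square)
    then show ?thesis
      unfolding zfun_def t2 t_def[symmetric]
      using assms by (simp add: real_sqrt_mult w_def v_def wfun_pos less_imp_le)
  qed
  have sq1: "(1 + exp (-2 * \<beta>))\<^sup>2 + a * (1 - exp (-2 * \<beta>))\<^sup>2 - 2 * exp (-\<beta>) * zfun a \<beta> = (w - t * v)\<^sup>2"
  proof -
    have "(w - t * v)\<^sup>2 = w\<^sup>2 + t\<^sup>2 * v\<^sup>2 - 2 * t * (w * v)"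
      by (simp add: algebra_simps power2_eq_square)
    also have "\<dots> = (1 + t\<^sup>2)\<^sup>2 + a * (1 - t\<^sup>2)\<^sup>2 - 2 * t * (w * v)"
      unfolding w2 v2 by (simp add: algebra_simps power2_eq_square)
    finally show ?thesis
      unfolding t2 z t_def[symmetric] by simp
  qed
  have sq2: "(1 + exp (-2 * \<beta>))\<^sup>2 - a * (1 - exp (-2 * \<beta>))\<^sup>2 - 2 * exp (-\<beta>) * zfun a \<beta> = (v - t * w)\<^sup>2"
  proof -
    have "(v - t * w)\<^sup>2 = v\<^sup>2 + t\<^sup>2 * w\<^sup>2 - 2 * t * (w * v)"
      by (simp add: algebra_simps power2_eq_square)
    also have "\<dots> = (1 + t\<^sup>2)\<^sup>2 - a * (1 - t\<^sup>2)\<^sup>2 - 2 * t * (w * v)"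
      unfolding w2 v2 by (simp add: algebra_simps power2_eq_square)
    finally show ?thesis
      unfolding t2 z t_def[symmetric] by simp
  qed
  have gt: "t * v < w" "t * w < v"
    using mult_wfun_minus_less_wfun[of t a] mult_wfun_minus_less_wfun[of t "-a"] t assms by (simp_all add: w_def v_def)
  have ln1: "ln ((w - t * v)\<^sup>2) = 2 * (ln (1 + t\<^sup>2) + ln (1 - t\<^sup>2) + ln (1 + a) - ln (w + t * v))"
    using ln_wfun_diff[of t a] gt t assms by (simp add: ln_realpow w_def v_def)
  have ln2: "ln ((v - t * w)\<^sup>2) = 2 * (ln (1 + t\<^sup>2) + ln (1 - t\<^sup>2) + ln (1 - a) - ln (v + t * w))"
    using ln_wfun_diff[of t "-a"] gt t assms by (simp add: ln_realpow w_def v_def)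
  have ln0: "ln ((1 + t\<^sup>2) * (1 - t\<^sup>2)\<^sup>2) = ln (1 + t\<^sup>2) + 2 * ln (1 - t\<^sup>2)"
    using t by (simp add: ln_mult ln_realpow power_less_one_iff add_pos_nonneg less_imp_neq[symmetric])
  show ?thesis
    unfolding Gfun_def sq1 sq2 unfolding t2 ln0 ln1 ln2 chi_def t_def[symmetric] w_def[symmetric] v_def[symmetric]
    by (simp add: field_simps)
qed

lemma has_real_derivative_wfun:
  assumes "-1 < a" "a < 1"
  shows "(wfun t has_real_derivative (1 - t\<^sup>2) / (2 * wfun t a)) (at a)"
  unfolding wfun_def[abs_def]
  using assms wfun_radicand_pos[of a t]
  by (auto intro!: derivative_eq_intros simp: divide_simps)

lemma has_real_derivative_chi:
  fixes t :: real
  assumes t: "0 < t" "t < 1" and a: "-1 < a" "a < 1"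
  shows "(chi t has_real_derivative
      ln ((wfun t a + t * wfun t (-a)) / (wfun t (-a) + t * wfun t a))) (at a)"
proof -
  define w v where "w = wfun t a" and "v = wfun t (-a)"
  define B where "B = 1 - t\<^sup>2"
  have wv: "0 < w" "0 < v"
    using a by (simp_all add: w_def v_def wfun_pos)
  have dw: "(wfun t has_real_derivative B / (2 * w)) (at a)"
    using has_real_derivative_wfun[OF a] by (simp add: w_def B_def)
  have dv: "((\<lambda>x. wfun t (-x)) has_real_derivative - (B / (2 * v))) (at a)"
    using has_real_derivative_wfun[of "-a" t] a by (simp add: DERIV_mirror[symmetric] v_def B_def)
  define P Q where "P = w + t * v" and "Q = v + t * w"
  define P' Q' where "P' = B / (2 * w) - t * (B / (2 * v))" and "Q' = t * (B / (2 * w)) - B / (2 * v)"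
  have pos: "0 < P" "0 < Q"
    using wv t by (simp_all add: P_def Q_def add_pos_pos)
  have "(chi t has_real_derivative ln P - ln Q + ((1 + a) * (P' / P) + (1 - a) * (Q' / Q))) (at a)"
    unfolding chi_def[abs_def]
    using pos by (auto intro!: derivative_eq_intros dw dv simp: P_def Q_def P'_def Q'_def w_def v_def mult_ac)
  moreover have "(1 + a) * (P' / P) + (1 - a) * (Q' / Q) = 0"
  proof -
    \<comment> \<open>by wfun_product at a and at -a, both sides are (1 - t^4) (1 - a^2)\<close>
    have cross: "(1 + a) * (v - t * w) * Q = (1 - a) * (w - t * v) * P"
      using wfun_product[OF a, of t] wfun_product[of "-a" t] a
      by (simp add: P_def Q_def w_def v_def mult_ac)
    have "(1 + a) * (P' / P) + (1 - a) * (Q' / Q)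
        = B / (2 * w * v) * ((1 + a) * (v - t * w) / P - (1 - a) * (w - t * v) / Q)"
      using wv pos by (simp add: P'_def Q'_def field_simps)
    also have "\<dots> = 0"
      using cross pos by (simp add: divide_simps)
    finally show ?thesis .
  qed
  ultimately show ?thesis
    using pos by (simp add: ln_div P_def Q_def w_def v_def)
qed

definition psi :: "nat \<Rightarrow> real \<Rightarrow> real \<Rightarrow> real" where
  "psi d t a = (real d * chi t a - ((1 + a) * ln (1 + a) + (1 - a) * ln (1 - a))) / 2"

lemma psi_minus: "psi d t (-a) = psi d t a"
  by (simp add: psi_def chi_def algebra_simps)

lemma fd_eq_psi:
  assumes "0 < \<beta>" "-1 < a" "a < 1"
  shows "fd d a \<beta> = (2 - real d) * ln 2 - real d / 2 * ln (1 + exp (-2 * \<beta>)) + psi d (exp (-\<beta>)) a"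
proof -
  have half: "1 - (1 + a) / 2 = (1 - a) / 2"
    by (simp add: field_simps)
  have ln_half: "ln ((1 + a) / 2) = ln (1 + a) - ln 2" "ln ((1 - a) / 2) = ln (1 - a) - ln 2"
    using assms by (simp_all add: ln_div)
  have "binent ((1 + a) / 2) = ln 2 - ((1 + a) * ln (1 + a) + (1 - a) * ln (1 - a)) / 2"
    unfolding binent_def half ln_half by (simp add: field_simps)
  then show ?thesis
    using assms by (simp add: fd_def Gfun_eq_chi psi_def field_simps)
qed

lemma has_real_derivative_psi:
  fixes t :: real
  assumes "0 < t" "t < 1" "-1 < a" "a < 1"
  shows "(psi d t has_real_derivative
      (real d * ln ((wfun t a + t * wfun t (-a)) / (wfun t (-a) + t * wfun t a))
       - ln ((1 + a) / (1 - a))) / 2) (at a)"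
proof -
  have "((\<lambda>x. (1 + x) * ln (1 + x) + (1 - x) * ln (1 - x)) has_real_derivative ln (1 + a) - ln (1 - a)) (at a)"
    using assms by (auto intro!: derivative_eq_intros)
  then show ?thesis
    unfolding psi_def[abs_def] using assms
    by (auto intro!: derivative_eq_intros has_real_derivative_chi simp: ln_div)
qed

lemma psi_deriv_neg:
  fixes t :: real
  assumes d: "1 \<le> d" and t: "0 < t" "t < 1" and a: "0 < a" "a < 1"
    and bound: "real (d - 1) * ((1 - t) / (1 + t))\<^sup>2 < 1"
  shows "(real d * ln ((wfun t a + t * wfun t (-a)) / (wfun t (-a) + t * wfun t a))
      - ln ((1 + a) / (1 - a))) / 2 < 0"
proof -
  define w v where "w = wfun t a" and "v = wfun t (-a)"
  have vw: "0 < v" "v < w" "t * w < v" "t * v < w"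
    using a t mult_wfun_minus_less_wfun[of t "-a"] mult_wfun_minus_less_wfun[of t a]
    by (simp_all add: w_def v_def wfun_pos wfun_less_wfun)
  have "(w - t * v) * (w + t * v) = (1 + t\<^sup>2) * (1 - t\<^sup>2) * (1 + a)"
    using wfun_product[of a t] a by (simp add: w_def v_def)
  moreover have "(v - t * w) * (v + t * w) = (1 + t\<^sup>2) * (1 - t\<^sup>2) * (1 - a)"
    using wfun_product[of "-a" t] a by (simp add: w_def v_def)
  moreover have "(1 + t\<^sup>2) * (1 - t\<^sup>2) \<noteq> 0"
    using t power2_less_1_iff[of t] by (auto simp: add_nonneg_eq_0_iff)
  ultimately have "(1 + a) / (1 - a) = ((w - t * v) * (w + t * v)) / ((v - t * w) * (v + t * w))"
    by (metis nonzero_mult_divide_mult_cancel_left)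
  then have ratio: "(1 + a) / (1 - a) = (w + t * v) / (v + t * w) * ((w - t * v) / (v - t * w))"
    by (simp add: mult.commute)
  have odds: "ln ((1 + a) / (1 - a)) = ln ((w + t * v) / (v + t * w)) + ln ((w - t * v) / (v - t * w))"
    unfolding ratio using vw t by (intro ln_mult_pos) (auto simp: add_pos_pos)
  have "real (d - 1) * ln ((w + t * v) / (v + t * w)) < ln ((w - t * v) / (v - t * w))"
    using t vw bound by (intro ln_ratio_mult_less) auto
  then show ?thesis
    using d by (simp add: odds of_nat_diff algebra_simps w_def[symmetric] v_def[symmetric])
qed

lemma psi_less_psi_zero:
  fixes t :: real
  assumes d: "1 \<le> d" and t: "0 < t" "t < 1" and a: "0 < a" "a < 1"
    and bound: "real (d - 1) * ((1 - t) / (1 + t))\<^sup>2 < 1"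
  shows "psi d t a < psi d t 0"
proof (rule DERIV_neg_imp_decreasing_open[OF a(1)])
  fix x :: real
  assume "0 < x" "x < a"
  then show "\<exists>y. (psi d t has_real_derivative y) (at x) \<and> y < 0"
    using has_real_derivative_psi[of t x d] psi_deriv_neg[OF d t, of x] bound t a by auto
next
  show "continuous_on {0..a} (psi d t)"
  proof (rule DERIV_atLeastAtMost_imp_continuous_on)
    fix x :: real
    assume "0 \<le> x" "x \<le> a"
    then show "\<exists>y. (psi d t has_real_derivative y) (at x)"
      using has_real_derivative_psi[OF t, of x d] a by auto
  qed
qed

lemma beta_KS_eq_artanh:
  assumes "3 \<le> d"
  shows "beta_KS d = 2 * artanh (1 / sqrt (real d - 1))"
proof -
  define s where "s = sqrt (real d - 1)"
  have "1 < s"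
    using assms by (simp add: s_def)
  then have "(1 + 1 / s) / (1 - 1 / s) = (s + 1) / (s - 1)"
    by (simp add: field_simps)
  then show ?thesis
    by (simp add: beta_KS_def artanh_def s_def[symmetric])
qed

lemma tanh_half_sq_less_beta_KS:
  assumes "3 \<le> d" "0 \<le> \<beta>" "\<beta> < beta_KS d"
  shows "real (d - 1) * (tanh (\<beta> / 2))\<^sup>2 < 1"
proof -
  define s where "s = sqrt (real d - 1)"
  have s: "1 < s" "s\<^sup>2 = real (d - 1)"
    using assms(1) by (simp_all add: s_def of_nat_diff)
  have inv_s: "-1 < 1 / s" "1 / s < 1"
    using s by (simp_all add: less_trans[of "-1" 0])
  have "artanh (tanh (\<beta> / 2)) < artanh (1 / s)"
    using assms beta_KS_eq_artanh[OF assms(1)] by (simp add: artanh_tanh_real s_def)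
  then have "tanh (\<beta> / 2) < 1 / s"
    using artanh_real_less_iff[OF _ _ inv_s] tanh_real_bounds[of "\<beta> / 2"] by auto
  moreover have "0 \<le> tanh (\<beta> / 2)"
    using assms by simp
  ultimately have "(tanh (\<beta> / 2))\<^sup>2 < (1 / s)\<^sup>2"
    by (intro power_strict_mono) auto
  moreover have "0 < real (d - 1)"
    using assms(1) by simp
  ultimately show ?thesis
    using s by (simp add: power_divide field_simps)
qed

lemma fd_less_fd_zero:
  assumes "3 \<le> d" "0 < \<beta>" "\<beta> < beta_KS d" "-1 < a" "a < 1" "a \<noteq> 0"
  shows "fd d a \<beta> < fd d 0 \<beta>"
proof -
  define t where "t = exp (-\<beta>)"
  have t: "0 < t" "t < 1"
    using assms(2) by (simp_all add: t_def)
  have "tanh (\<beta> / 2) = (1 - t) / (1 + t)"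
    by (simp add: tanh_real_altdef t_def)
  then have bound: "real (d - 1) * ((1 - t) / (1 + t))\<^sup>2 < 1"
    using tanh_half_sq_less_beta_KS assms(1-3) by (metis less_imp_le)
  have "psi d t a = psi d t \<bar>a\<bar>"
    by (cases "0 \<le> a") (simp_all add: psi_minus)
  also have "\<dots> < psi d t 0"
    using psi_less_psi_zero[OF _ t _ _ bound] assms by simp
  finally show ?thesis
    using assms fd_eq_psi[of \<beta> a d] fd_eq_psi[of \<beta> 0 d] by (simp add: t_def)
qed

theorem lemma8p3:
  fixes d :: nat and \<beta> :: real
  assumes "d \<ge> 3" and "0 < \<beta>" and "\<beta> < beta_KS d"
  shows "{\<alpha> \<in> {-1<..<1}. \<forall>\<alpha>' \<in> {-1<..<1}. fd d \<alpha>' \<beta> \<le> fd d \<alpha> \<beta>} = {0}"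
proof (intro equalityI subsetI)
  fix a
  assume "a \<in> {\<alpha> \<in> {-1<..<1}. \<forall>\<alpha>' \<in> {-1<..<1}. fd d \<alpha>' \<beta> \<le> fd d \<alpha> \<beta>}"
  then have "-1 < a" "a < 1" "fd d 0 \<beta> \<le> fd d a \<beta>"
    by auto
  then show "a \<in> {0}"
    using fd_less_fd_zero[OF assms, of a] by (cases "a = 0") auto
next
  fix a :: real
  assume "a \<in> {0}"
  then show "a \<in> {\<alpha> \<in> {-1<..<1}. \<forall>\<alpha>' \<in> {-1<..<1}. fd d \<alpha>' \<beta> \<le> fd d \<alpha> \<beta>}"
    using fd_less_fd_zero[OF assms] by (force intro: less_imp_le)
qed

end
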